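(* The linear map $\Theta:\mathbf{H}_\mathrm{Pack}\to\mathbf{H}_{\mathrm{Pack}_1}$ defined by $\Theta(M)=\mathrm{Comp}(M)$ for $M\in\mathrm{Pack}$ is a bialgebra morphism from $(\mathbf{H}_\mathrm{Pack},\searrow,\blacktriangle)$ to $(\mathbf{H}_{\mathrm{Pack}_1},\rightarrow,\blacktriangle)$.
   Context: A packed matrix is a matrix with entries in $\mathbb{N}$ with no zero row and no zero column (the empty matrix $1$, with $0$ rows and columns, is packed); $\mathrm{Pack}$ is their set and $\mathbf{H}_\mathrm{Pack}$ the $\mathbb{Q}$-vector space with basis $\mathrm{Pack}$. $\mathcal{M}_{k,l}(\mathbb{N})$ denotes $k\times l$ matrices over $\mathbb{N}$; $p(M)$ is obtained from $M$ by deleting zero rows and columns. On $\mathbf{H}_\mathrm{Pack}$: $M\searrow M'=\begin{pmatrix}M&0\\0&M'\end{pmatrix}$ and, for $M$ with $k$ rows and $l$ columns, $\blacktriangle(M)=\sum_{M',M''\in\mathcal{M}_{k,l}(\mathbb{N}),\ M'+M''=M}p(M')\otimes p(M'')$, $\blacktriangle(1)=1\otimes1$. $\mathrm{Pack}_1$ is the set of packed row matrices $(a_1\ \cdots\ a_l)$, $a_i\geq1$, together with $1$; $\mathbf{H}_{\mathrm{Pack}_1}$ is the $\mathbb{Q}$-vector space with basis $\mathrm{Pack}_1$, with product concatenation $(a_1\cdots a_l)\rightarrow(b_1\cdots b_m)=(a_1\cdots a_lb_1\cdots b_m)$ and coproduct $\blacktriangle(M)=\sum_{M',M''\in\mathcal{M}_{1,l}(\mathbb{N}),\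 M'+M''=M}p(M')\otimes p(M'')$ (this is the Hopf algebra of noncommutative symmetric functions). For $M=(m_{i,j})$ with $k$ rows and $l$ columns, $\mathrm{Comp}(M)$ is the packed row matrix obtained by deleting the zeros from the sequence $(m_{1,1},\dots,m_{1,l},m_{2,1},\dots,m_{k,l})$ (reading the rows in order); $\mathrm{Comp}(1)=1$. *)

theory Defs
  imports Complex_Main
begin

text \<open>A matrix is a list of rows. A k x l matrix has k rows, each of length l.
  The empty matrix 1 is the empty list.\<close>

type_synonym mat = "nat list list"

definition ncols :: "mat \<Rightarrow> nat" where
  "ncols M = (case M of [] \<Rightarrow> 0 | r # _ \<Rightarrow> length r)"

definition is_mat :: "nat \<Rightarrow> nat \<Rightarrow> mat \<Rightarrow> bool" where
  "is_mat k l M \<longleftrightarrow> length M = k \<and> (\<forall>r\<in>set M. length r = l)"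

definition nonzero_row :: "nat list \<Rightarrow> bool" where
  "nonzero_row r \<longleftrightarrow> (\<exists>x\<in>set r. x \<noteq> 0)"

definition packed :: "mat \<Rightarrow> bool" where
  "packed M \<longleftrightarrow> is_mat (length M) (ncols M) M
     \<and> (\<forall>r\<in>set M. nonzero_row r)
     \<and> (\<forall>j<ncols M. \<exists>r\<in>set M. r ! j \<noteq> 0)"

definition packed1 :: "mat \<Rightarrow> bool" where
  "packed1 M \<longleftrightarrow> packed M \<and> length M \<le> 1"

text \<open>p(M): delete zero rows and zero columns.\<close>
definition pk :: "mat \<Rightarrow> mat" where
  "pk M = map (\<lambda>r. nths r {j. \<exists>r'\<in>set M. j < length r' \<and> r' ! j \<noteq> 0})
             (filter nonzero_row M)"

definition dsum :: "mat \<Rightarrow> mat \<Rightarrow> mat" where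
  "dsum M M' = map (\<lambda>r. r @ replicate (ncols M') 0) M
             @ map (\<lambda>r. replicate (ncols M) 0 @ r) M'"

definition conc :: "mat \<Rightarrow> mat \<Rightarrow> mat" where
  "conc A B = (if A = [] then B else if B = [] then A else [hd A @ hd B])"

definition Comp :: "mat \<Rightarrow> mat" where
  "Comp M = (let s = filter (\<lambda>x. x \<noteq> 0) (concat M) in if s = [] then [] else [s])"

definition decomp :: "mat \<Rightarrow> (mat \<times> mat) set" where
  "decomp M = {(A, B). is_mat (length M) (ncols M) A \<and> is_mat (length M) (ncols M) B
       \<and> (\<forall>i<length M. \<forall>j<ncols M. A ! i ! j + B ! i ! j = M ! i ! j)}"

text \<open>Elements of the Q-vector space with basis a set S of objects of type 'a are
  finitely supported coefficient functions 'a \<Rightarrow> rat supported in S.  The tensor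
  product of two such spaces has the products of basis elements as basis.\<close>

definition supp :: "('a \<Rightarrow> rat) \<Rightarrow> 'a set" where
  "supp x = {a. x a \<noteq> 0}"

definition vspace :: "('a \<Rightarrow> bool) \<Rightarrow> ('a \<Rightarrow> rat) set" where
  "vspace B = {x. finite (supp x) \<and> (\<forall>a. x a \<noteq> 0 \<longrightarrow> B a)}"

definition delta :: "'a \<Rightarrow> 'a \<Rightarrow> rat" where
  "delta a = (\<lambda>b. if b = a then 1 else 0)"

definition lin_ext :: "('a \<Rightarrow> 'b \<Rightarrow> rat) \<Rightarrow> ('a \<Rightarrow> rat) \<Rightarrow> 'b \<Rightarrow> rat" where
  "lin_ext f x = (\<lambda>b. \<Sum>a\<in>supp x. x a * f a b)"

definition bilin_ext :: "('a \<Rightarrow> 'a \<Rightarrow> 'a) \<Rightarrow> ('a \<Rightarrow> rat) \<Rightarrow> ('a \<Rightarrow> rat) \<Rightarrow> 'a \<Rightarrow> rat" where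
  "bilin_ext m x y = (\<lambda>c. \<Sum>a\<in>supp x. \<Sum>b\<in>supp y. x a * y b * delta (m a b) c)"

definition tensor_map :: "('a \<Rightarrow> 'b \<Rightarrow> rat) \<Rightarrow> ('a \<Rightarrow> 'b \<Rightarrow> rat)
    \<Rightarrow> ('a \<times> 'a \<Rightarrow> rat) \<Rightarrow> ('b \<times> 'b \<Rightarrow> rat)" where
  "tensor_map f g = lin_ext (\<lambda>(a, a'). \<lambda>(b, b'). f a b * g a' b')"

text \<open>Coproduct on a basis matrix: sum over decompositions of p(M') \<otimes> p(M'').
  For row matrices (k = 1) and for 1 this is literally the coproduct of H_{Pack_1}.\<close>
definition cop_basis :: "mat \<Rightarrow> mat \<times> mat \<Rightarrow> rat" where
  "cop_basis M = (\<lambda>t. \<Sum>(A, B)\<in>decomp M. delta (pk A, pk B) t)"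

definition HPack :: "(mat \<Rightarrow> rat) set" where "HPack = vspace packed"
definition HPack1 :: "(mat \<Rightarrow> rat) set" where "HPack1 = vspace packed1"

definition prodPack :: "(mat \<Rightarrow> rat) \<Rightarrow> (mat \<Rightarrow> rat) \<Rightarrow> mat \<Rightarrow> rat" where
  "prodPack = bilin_ext dsum"
definition prodPack1 :: "(mat \<Rightarrow> rat) \<Rightarrow> (mat \<Rightarrow> rat) \<Rightarrow> mat \<Rightarrow> rat" where
  "prodPack1 = bilin_ext conc"

definition copPack :: "(mat \<Rightarrow> rat) \<Rightarrow> mat \<times> mat \<Rightarrow> rat" where
  "copPack = lin_ext cop_basis"
definition copPack1 :: "(mat \<Rightarrow> rat) \<Rightarrow> mat \<times> mat \<Rightarrow> rat" where
  "copPack1 = lin_ext cop_basis"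

definition unit_elt :: "mat \<Rightarrow> rat" where "unit_elt = delta []"
definition counit :: "(mat \<Rightarrow> rat) \<Rightarrow> rat" where "counit x = x []"

definition Theta_basis :: "mat \<Rightarrow> mat \<Rightarrow> rat" where
  "Theta_basis M = delta (Comp M)"
definition Theta :: "(mat \<Rightarrow> rat) \<Rightarrow> mat \<Rightarrow> rat" where
  "Theta = lin_ext Theta_basis"

end

theory Submission
  imports Defs
begin

text \<open>
  \<open>Comp\<close> forgets the shape of a matrix and keeps its nonzero entries in reading order, so it turns
  block diagonal sums into concatenations.  For the coproduct, splitting a packed matrix entrywise
  as \<open>M' + M''\<close> and reading off the nonzero entries of both parts amounts to splitting the word
  \<open>Comp M\<close> entrywise: the matrix splits row by row, a zero entry splits only as \<open>0 + 0\<close>, and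
  \<open>p\<close> does not change the word of nonzero entries.  Everything else is linearity.
\<close>

section \<open>Linear and bilinear extensions\<close>

lemma supp_delta: "supp (delta a) = {a}"
  by (auto simp: supp_def delta_def)

lemma lin_ext_delta: "lin_ext f (delta a) = f a"
  unfolding lin_ext_def supp_delta by (simp add: delta_def)

lemma lin_ext_cong: "(\<And>a. a \<in> supp x \<Longrightarrow> f a = g a) \<Longrightarrow> lin_ext f x = lin_ext g x"
  by (simp add: lin_ext_def)

lemma supp_lin_ext: "supp (lin_ext g x) \<subseteq> (\<Union>a\<in>supp x. supp (g a))"
proof
  fix c assume "c \<in> supp (lin_ext g x)"
  then have "(\<Sum>a\<in>supp x. x a * g a c) \<noteq> 0" by (simp add: supp_def lin_ext_def)
  then obtain a where "a \<in> supp x" "x a * g a c \<noteq> 0" by (meson sum.neutral)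
  then show "c \<in> (\<Union>a\<in>supp x. supp (g a))" by (auto simp: supp_def)
qed

lemma finite_supp_lin_ext:
  "finite (supp x) \<Longrightarrow> (\<And>a. a \<in> supp x \<Longrightarrow> finite (supp (g a))) \<Longrightarrow> finite (supp (lin_ext g x))"
  by (rule finite_subset[OF supp_lin_ext]) auto

lemma supp_sum_delta: "supp (\<lambda>t. \<Sum>i\<in>I. delta (e i) t) \<subseteq> e ` I"
proof
  fix t assume "t \<in> supp (\<lambda>t. \<Sum>i\<in>I. delta (e i) t)"
  then obtain i where "i \<in> I" "delta (e i) t \<noteq> 0"
    by (metis (mono_tags, lifting) mem_Collect_eq sum.neutral supp_def)
  then show "t \<in> e ` I"
    by (auto simp: delta_def split: if_splits)
qed

lemma lin_ext_superset:
  assumes "finite S" "supp x \<subseteq> S"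
  shows "lin_ext f x c = (\<Sum>a\<in>S. x a * f a c)"
  unfolding lin_ext_def
  by (rule sum.mono_neutral_left) (use assms in \<open>auto simp: supp_def\<close>)

lemma lin_ext_lin_ext:
  assumes x: "finite (supp x)" and g: "\<And>a. a \<in> supp x \<Longrightarrow> finite (supp (g a))"
  shows "lin_ext f (lin_ext g x) = lin_ext (\<lambda>a. lin_ext f (g a)) x"
proof
  fix c
  define S where "S = (\<Union>a\<in>supp x. supp (g a))"
  have S: "finite S" using x g by (simp add: S_def)
  have "lin_ext f (lin_ext g x) c = (\<Sum>b\<in>S. lin_ext g x b * f b c)"
    using S supp_lin_ext unfolding S_def by (rule lin_ext_superset)
  also have "\<dots> = (\<Sum>a\<in>supp x. x a * (\<Sum>b\<in>S. g a b * f b c))"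
    by (simp add: lin_ext_def sum_distrib_left sum_distrib_right mult.assoc sum.swap[of _ S])
  also have "\<dots> = (\<Sum>a\<in>supp x. x a * lin_ext f (g a) c)"
    by (intro sum.cong refl arg_cong[where f="(*) _"] lin_ext_superset[symmetric] S)
       (auto simp: S_def)
  finally show "lin_ext f (lin_ext g x) c = lin_ext (\<lambda>a. lin_ext f (g a)) x c"
    by (simp add: lin_ext_def)
qed

lemma finite_supp_delta_map:
  "finite (supp x) \<Longrightarrow> finite (supp (lin_ext (\<lambda>a. delta (\<phi> a)) x))"
  by (rule finite_supp_lin_ext) (simp_all add: supp_delta)

lemma lin_ext_delta_map_lin_ext:
  "finite (supp x) \<Longrightarrow> lin_ext f (lin_ext (\<lambda>a. delta (\<phi> a)) x) = lin_ext (\<lambda>a. f (\<phi> a)) x"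
  by (simp add: lin_ext_lin_ext supp_delta lin_ext_delta)

lemma bilin_ext_eq_lin_ext: "bilin_ext m x y = lin_ext (\<lambda>a. lin_ext (\<lambda>b. delta (m a b)) y) x"
  by (simp add: bilin_ext_def lin_ext_def sum_distrib_left mult.assoc)

lemma lin_ext_delta_map_bilin_ext:
  assumes x: "finite (supp x)" and y: "finite (supp y)"
    and hom: "\<And>a b. \<phi> (m a b) = m' (\<phi> a) (\<phi> b)"
  shows "lin_ext (\<lambda>a. delta (\<phi> a)) (bilin_ext m x y)
       = bilin_ext m' (lin_ext (\<lambda>a. delta (\<phi> a)) x) (lin_ext (\<lambda>a. delta (\<phi> a)) y)"
  using x y
  by (simp add: bilin_ext_eq_lin_ext lin_ext_lin_ext finite_supp_delta_map
      lin_ext_delta_map_lin_ext hom)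

lemma lin_ext_sum_delta:
  assumes "finite I"
  shows "lin_ext h (\<lambda>t. \<Sum>i\<in>I. delta (e i) t) = (\<lambda>c. \<Sum>i\<in>I. h (e i) c)"
proof -
  have sum_delta: "(\<lambda>t. \<Sum>i\<in>I. delta (e i) t) = lin_ext (\<lambda>i. delta (e i)) (\<lambda>i. of_bool (i \<in> I))"
    by (simp add: lin_ext_def supp_def)
  have "supp (\<lambda>i. of_bool (i \<in> I) :: rat) = I"
    by (simp add: supp_def)
  then show ?thesis
    unfolding sum_delta using assms by (simp add: lin_ext_delta_map_lin_ext) (simp add: lin_ext_def)
qed

section \<open>Entrywise decompositions of rows and matrices\<close>

abbreviation nonzeros :: "nat list \<Rightarrow> nat list" where
  "nonzeros \<equiv> filter (\<lambda>x. x \<noteq> 0)"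

definition row_decomps :: "nat list \<Rightarrow> (nat list \<times> nat list) set" where
  "row_decomps m = {(a, b). length a = length m \<and> length b = length m
       \<and> (\<forall>i<length m. a ! i + b ! i = m ! i)}"

lemma row_decomps_Nil: "row_decomps [] = {([], [])}"
  by (auto simp: row_decomps_def)

lemma row_decomps_Cons:
  "row_decomps (x # m) = (\<lambda>(u, (a, b)). (u # a, (x - u) # b)) ` ({..x} \<times> row_decomps m)"
proof (intro equalityI subsetI)
  fix p assume p: "p \<in> row_decomps (x # m)"
  then obtain u a v b where ab: "p = (u # a, v # b)"
    by (auto simp: row_decomps_def length_Suc_conv)
  with p have "u + v = x" "(a, b) \<in> row_decomps m"
    by (fastforce simp: row_decomps_def)+
  with ab show "p \<in> (\<lambda>(u, (a, b)). (u # a, (x - u) # b)) ` ({..x} \<times> row_decomps m)"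
    by (auto intro!: image_eqI[where x="(u, (a, b))"])
qed (auto simp: row_decomps_def nth_Cons split: nat.splits)

lemma finite_row_decomps: "finite (row_decomps m)"
  by (induction m) (auto simp: row_decomps_Nil row_decomps_Cons)

lemma sum_row_decomps_Cons:
  "(\<Sum>(a, b)\<in>row_decomps (x # m). h a b)
     = (\<Sum>u\<le>x. \<Sum>(a, b)\<in>row_decomps m. h (u # a) ((x - u) # b))"
proof -
  have inj: "inj_on (\<lambda>(u, (a, b)). (u # a, (x - u) # b)) ({..x} \<times> row_decomps m)"
    by (auto simp: inj_on_def)
  have "(\<Sum>(a, b)\<in>row_decomps (x # m). h a b)
      = (\<Sum>(u, (a, b))\<in>{..x} \<times> row_decomps m. h (u # a) ((x - u) # b))"
    unfolding row_decomps_Cons sum.reindex[OF inj] by (simp add: case_prod_beta)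
  then show ?thesis
    by (simp add: sum.cartesian_product case_prod_beta)
qed

lemma sum_row_decomps_append:
  "(\<Sum>(a, b)\<in>row_decomps (r @ m). h a b)
     = (\<Sum>(a, b)\<in>row_decomps r. \<Sum>(c, d)\<in>row_decomps m. h (a @ c) (b @ d))"
  by (induction r arbitrary: h) (simp_all add: row_decomps_Nil sum_row_decomps_Cons)

lemma sum_row_decomps_nonzeros:
  "(\<Sum>(a, b)\<in>row_decomps m. g (nonzeros a) (nonzeros b))
     = (\<Sum>(a, b)\<in>row_decomps (nonzeros m). g (nonzeros a) (nonzeros b))"
proof (induction m arbitrary: g)
  case (Cons x m)
  show ?case
  proof (cases "x = 0")
    case True
    then show ?thesis using Cons.IH[of g] by (simp add: sum_row_decomps_Cons)
  next
    case False
    have "(\<Sum>(a, b)\<in>row_decomps m. g (nonzeros (u # a)) (nonzeros ((x - u) # b)))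
        = (\<Sum>(a, b)\<in>row_decomps (nonzeros m). g (nonzeros (u # a)) (nonzeros ((x - u) # b)))"
      for u
      using Cons.IH[of "\<lambda>p q. g (if u \<noteq> 0 then u # p else p) (if x - u \<noteq> 0 then (x - u) # q else q)"]
      by (simp only: filter.simps)
    with False show ?thesis by (simp add: sum_row_decomps_Cons)
  qed
qed simp

fun rowwise_decomps :: "mat \<Rightarrow> (mat \<times> mat) set" where
  "rowwise_decomps [] = {([], [])}"
| "rowwise_decomps (r # M) =
     (\<lambda>((a, b), (A, B)). (a # A, b # B)) ` (row_decomps r \<times> rowwise_decomps M)"

lemma mem_rowwise_decomps:
  "(A, B) \<in> rowwise_decomps M \<longleftrightarrow> length A = length M \<and> length B = length M
     \<and> (\<forall>i<length M. (A ! i, B ! i) \<in> row_decomps (M ! i))"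
proof (induction M arbitrary: A B)
  case (Cons r M)
  have "(A, B) \<in> rowwise_decomps (r # M) \<longleftrightarrow> (\<exists>a A' b B'. A = a # A' \<and> B = b # B'
      \<and> (a, b) \<in> row_decomps r \<and> (A', B') \<in> rowwise_decomps M)"
    by (auto intro: rev_image_eqI)
  then show ?case
    by (auto simp: Cons.IH length_Suc_conv All_less_Suc2)
qed simp

lemma finite_rowwise_decomps: "finite (rowwise_decomps M)"
  by (induction M) (auto simp: finite_row_decomps)

lemma decomp_eq_rowwise_decomps:
  assumes "packed M"
  shows "decomp M = rowwise_decomps M"
proof -
  have "length (M ! i) = ncols M" if "i < length M" for i
    using assms that by (auto simp: packed_def is_mat_def)
  then show ?thesis
    by (auto simp: decomp_def is_mat_def mem_rowwise_decomps row_decomps_def all_set_conv_all_nth)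
qed

lemma sum_rowwise_decomps_concat:
  "(\<Sum>(A, B)\<in>rowwise_decomps M. h (concat A) (concat B))
     = (\<Sum>(a, b)\<in>row_decomps (concat M). h a b)"
proof (induction M arbitrary: h)
  case Nil
  then show ?case by (simp add: row_decomps_Nil)
next
  case (Cons r M)
  have inj: "inj_on (\<lambda>((a, b), (A, B)). (a # A, b # B)) (row_decomps r \<times> rowwise_decomps M)"
    by (auto simp: inj_on_def)
  have "(\<Sum>(A, B)\<in>rowwise_decomps (r # M). h (concat A) (concat B))
      = (\<Sum>((a, b), (A, B))\<in>row_decomps r \<times> rowwise_decomps M. h (a @ concat A) (b @ concat B))"
    unfolding rowwise_decomps.simps sum.reindex[OF inj] by (simp add: case_prod_beta)
  also have "\<dots> = (\<Sum>(a, b)\<in>row_decomps r.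
      \<Sum>(A, B)\<in>rowwise_decomps M. h (a @ concat A) (b @ concat B))"
    by (simp add: sum.cartesian_product case_prod_beta)
  also have "\<dots> = (\<Sum>(a, b)\<in>row_decomps r. \<Sum>(c, d)\<in>row_decomps (concat M). h (a @ c) (b @ d))"
  proof (intro sum.cong refl, clarify)
    fix a b
    show "(\<Sum>(A, B)\<in>rowwise_decomps M. h (a @ concat A) (b @ concat B))
        = (\<Sum>(c, d)\<in>row_decomps (concat M). h (a @ c) (b @ d))"
      using Cons.IH[of "\<lambda>c d. h (a @ c) (b @ d)"] by simp
  qed
  also have "\<dots> = (\<Sum>(a, b)\<in>row_decomps (concat (r # M)). h a b)"
    by (simp add: sum_row_decomps_append)
  finally show ?case .
qed

section \<open>Reading words of matrices\<close>

definition row_mat :: "nat list \<Rightarrow> mat" where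
  "row_mat s = (if s = [] then [] else [s])"

lemma Comp_eq_row_mat: "Comp A = row_mat (nonzeros (concat A))"
  by (simp add: Comp_def row_mat_def Let_def)

lemma filter_nths_eq_filter:
  "(\<And>j. j < length r \<Longrightarrow> j \<notin> S \<Longrightarrow> \<not> P (r ! j)) \<Longrightarrow> filter P (nths r S) = filter P r"
proof (induction r arbitrary: S)
  case (Cons x r)
  have "filter P (nths r {j. Suc j \<in> S}) = filter P r"
    using Cons.prems[of "Suc _"] by (intro Cons.IH) auto
  with Cons.prems[of 0] show ?case
    by (auto simp: nths_Cons)
qed simp

lemma nonzeros_concat_pk: "nonzeros (concat (pk A)) = nonzeros (concat A)"
proof -
  let ?S = "{j. \<exists>r'\<in>set A. j < length r' \<and> r' ! j \<noteq> 0}"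
  have columns: "map (\<lambda>r. nonzeros (nths r ?S)) (filter nonzero_row A) = map nonzeros (filter nonzero_row A)"
    by (intro map_cong refl filter_nths_eq_filter) auto
  have "nonzeros (concat (pk A)) = concat (map (\<lambda>r. nonzeros (nths r ?S)) (filter nonzero_row A))"
    by (simp add: pk_def filter_concat o_def)
  also have "\<dots> = nonzeros (concat (filter nonzero_row A))"
    by (simp only: columns filter_concat)
  also have "\<dots> = nonzeros (concat A)"
    by (induction A) (auto simp: nonzero_row_def filter_empty_conv)
  finally show ?thesis .
qed

lemma Comp_pk: "Comp (pk A) = Comp A"
  by (simp only: Comp_eq_row_mat nonzeros_concat_pk)

lemma pk_single_row: "pk [a] = row_mat (nonzeros a)"
proof -
  let ?S = "{j. j < length a \<and> a ! j \<noteq> 0}"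
  have "nonzeros (nths a ?S) = nths a ?S"
    by (auto simp: filter_id_conv set_nths)
  moreover have "nonzeros (nths a ?S) = nonzeros a"
    by (rule filter_nths_eq_filter) auto
  ultimately have "nths a ?S = nonzeros a"
    by simp
  moreover have "nonzero_row a \<longleftrightarrow> nonzeros a \<noteq> []"
    by (auto simp: nonzero_row_def filter_empty_conv)
  moreover have "{j. \<exists>r'\<in>set [a]. j < length r' \<and> r' ! j \<noteq> 0} = ?S"
    by auto
  ultimately show ?thesis
    by (simp add: pk_def row_mat_def)
qed

lemma decomp_single_row: "decomp [s] = (\<lambda>(a, b). ([a], [b])) ` row_decomps s"
proof (intro equalityI subsetI)
  fix p assume p: "p \<in> decomp [s]"
  then obtain a b where ab: "p = ([a], [b])"
    by (auto simp: decomp_def is_mat_def length_Suc_conv)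
  with p have "(a, b) \<in> row_decomps s"
    by (auto simp: decomp_def is_mat_def row_decomps_def ncols_def)
  with ab show "p \<in> (\<lambda>(a, b). ([a], [b])) ` row_decomps s"
    by auto
qed (auto simp: decomp_def is_mat_def row_decomps_def ncols_def)

lemma Comp_eq_Nil_iff: "packed M \<Longrightarrow> Comp M = [] \<longleftrightarrow> M = []"
  by (cases M) (auto simp: Comp_def packed_def nonzero_row_def filter_empty_conv)

lemma packed1_Comp: "packed1 (Comp M)"
  by (auto simp: Comp_def packed1_def packed_def is_mat_def ncols_def nonzero_row_def Let_def
      filter_empty_conv dest: nth_mem)

lemma Comp_dsum: "Comp (dsum A B) = conc (Comp A) (Comp B)"
  by (simp add: Comp_def dsum_def conc_def Let_def filter_concat o_def)

lemma finite_decomp: "packed M \<Longrightarrow> finite (decomp M)"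
  using finite_row_decomps
  by (simp add: decomp_eq_rowwise_decomps finite_rowwise_decomps)

lemma sum_decomp_Comp:
  assumes "packed M"
  shows "(\<Sum>(A, B)\<in>decomp M. h (Comp A) (Comp B)) = (\<Sum>(a, b)\<in>decomp (Comp M). h (pk a) (pk b))"
proof (cases "M = []")
  case True
  have "decomp [] = {([], [])}"
    by (auto simp: decomp_def is_mat_def)
  with True show ?thesis
    by (simp add: Comp_def pk_def)
next
  case False
  let ?s = "nonzeros (concat M)"
  have Comp_M: "Comp M = [?s]"
    using False Comp_eq_Nil_iff[OF assms] by (auto simp: Comp_def Let_def split: if_splits)
  have inj: "inj_on (\<lambda>(a, b). ([a], [b])) (row_decomps ?s)"
    by (auto simp: inj_on_def)
  have "(\<Sum>(A, B)\<in>decomp M. h (Comp A) (Comp B))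
      = (\<Sum>(A, B)\<in>rowwise_decomps M. h (row_mat (nonzeros (concat A))) (row_mat (nonzeros (concat B))))"
    by (simp only: decomp_eq_rowwise_decomps[OF assms] Comp_eq_row_mat)
  also have "\<dots> = (\<Sum>(a, b)\<in>row_decomps (concat M). h (row_mat (nonzeros a)) (row_mat (nonzeros b)))"
    by (rule sum_rowwise_decomps_concat)
  also have "\<dots> = (\<Sum>(a, b)\<in>row_decomps ?s. h (row_mat (nonzeros a)) (row_mat (nonzeros b)))"
    by (rule sum_row_decomps_nonzeros)
  also have "\<dots> = (\<Sum>(a, b)\<in>decomp [?s]. h (pk a) (pk b))"
    unfolding decomp_single_row sum.reindex[OF inj] by (simp add: pk_single_row case_prod_beta)
  finally show ?thesis
    by (simp only: Comp_M)
qed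

section \<open>The bialgebra morphism\<close>

lemma finite_supp_HPack: "x \<in> HPack \<Longrightarrow> finite (supp x)"
  by (simp add: HPack_def vspace_def)

lemma packed_of_supp_HPack: "x \<in> HPack \<Longrightarrow> a \<in> supp x \<Longrightarrow> packed a"
  by (simp add: HPack_def vspace_def supp_def)

lemma Theta_eq_lin_ext: "Theta = lin_ext (\<lambda>M. delta (Comp M))"
  by (simp add: Theta_def Theta_basis_def[abs_def])

lemma Theta_in_HPack1:
  assumes "x \<in> HPack"
  shows "Theta x \<in> HPack1"
proof -
  have supp: "supp (Theta x) \<subseteq> Comp ` supp x"
    using supp_lin_ext[of "\<lambda>M. delta (Comp M)" x] by (auto simp: Theta_eq_lin_ext supp_delta)
  then have "finite (supp (Theta x))"
    using finite_supp_HPack[OF assms] by (rule finite_surj[rotated])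
  with supp packed1_Comp show ?thesis
    by (auto simp: HPack1_def vspace_def supp_def)
qed

lemma Theta_prodPack:
  "x \<in> HPack \<Longrightarrow> y \<in> HPack \<Longrightarrow> Theta (prodPack x y) = prodPack1 (Theta x) (Theta y)"
  unfolding Theta_eq_lin_ext prodPack_def prodPack1_def
  by (rule lin_ext_delta_map_bilin_ext) (simp_all add: finite_supp_HPack Comp_dsum)

lemma Theta_unit: "Theta unit_elt = unit_elt"
  by (simp add: Theta_eq_lin_ext unit_elt_def lin_ext_delta Comp_def)

lemma counit_Theta:
  assumes x: "x \<in> HPack"
  shows "counit (Theta x) = counit x"
proof -
  have "counit (Theta x) = (\<Sum>a\<in>supp x. x a * delta (Comp a) [])"
    by (simp add: counit_def Theta_eq_lin_ext lin_ext_def)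
  also have "\<dots> = (\<Sum>a\<in>supp x. if a = [] then x [] else 0)"
  proof (rule sum.cong[OF refl])
    fix a assume "a \<in> supp x"
    then have "Comp a = [] \<longleftrightarrow> a = []"
      by (rule Comp_eq_Nil_iff[OF packed_of_supp_HPack[OF x]])
    then show "x a * delta (Comp a) [] = (if a = [] then x [] else 0)"
      by (auto simp: delta_def)
  qed
  also have "\<dots> = counit x"
    using finite_supp_HPack[OF x] by (simp add: counit_def supp_def)
  finally show ?thesis .
qed

lemma cop_basis_eq_sum_delta:
  "cop_basis M = (\<lambda>t. \<Sum>q\<in>decomp M. delta ((\<lambda>(A, B). (pk A, pk B)) q) t)"
  by (simp add: cop_basis_def case_prod_beta)

lemma tensor_map_Theta_cop_basis:
  assumes M: "packed M"
  shows "tensor_map Theta_basis Theta_basis (cop_basis M) = cop_basis (Comp M)"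
proof
  fix t :: "mat \<times> mat"
  obtain t1 t2 where t: "t = (t1, t2)"
    by fastforce
  have "tensor_map Theta_basis Theta_basis (cop_basis M) t
      = (\<Sum>(A, B)\<in>decomp M. delta (Comp (pk A)) t1 * delta (Comp (pk B)) t2)"
    unfolding tensor_map_def cop_basis_eq_sum_delta lin_ext_sum_delta[OF finite_decomp[OF M]]
    by (simp add: t Theta_basis_def case_prod_beta)
  also have "\<dots> = (\<Sum>(A, B)\<in>decomp M. delta (Comp A, Comp B) t)"
    by (intro sum.cong) (auto simp: t Comp_pk delta_def)
  also have "\<dots> = (\<Sum>(a, b)\<in>decomp (Comp M). delta (pk a, pk b) t)"
    using sum_decomp_Comp[OF M, of "\<lambda>X Y. delta (X, Y) t"] .
  finally show "tensor_map Theta_basis Theta_basis (cop_basis M) t = cop_basis (Comp M) t"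
    by (simp add: cop_basis_def)
qed

lemma tensor_map_Theta_copPack:
  assumes x: "x \<in> HPack"
  shows "tensor_map Theta_basis Theta_basis (copPack x) = copPack1 (Theta x)"
proof -
  have "finite (supp (cop_basis M))" if "M \<in> supp x" for M
  proof (rule finite_subset)
    show "supp (cop_basis M) \<subseteq> (\<lambda>(A, B). (pk A, pk B)) ` decomp M"
      unfolding cop_basis_eq_sum_delta by (rule supp_sum_delta)
    show "finite ((\<lambda>(A, B). (pk A, pk B)) ` decomp M)"
      using finite_decomp[OF packed_of_supp_HPack[OF x that]] by (rule finite_imageI)
  qed
  then have "tensor_map Theta_basis Theta_basis (copPack x)
      = lin_ext (\<lambda>M. tensor_map Theta_basis Theta_basis (cop_basis M)) x"
    unfolding tensor_map_def copPack_def by (rule lin_ext_lin_ext[OF finite_supp_HPack[OF x]])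
  also have "\<dots> = lin_ext (\<lambda>M. cop_basis (Comp M)) x"
    using tensor_map_Theta_cop_basis packed_of_supp_HPack[OF x] by (intro lin_ext_cong) simp
  also have "\<dots> = copPack1 (Theta x)"
    by (simp add: copPack1_def Theta_eq_lin_ext lin_ext_delta_map_lin_ext finite_supp_HPack[OF x])
  finally show ?thesis .
qed

theorem mainTheorem4:
  shows "(\<forall>x\<in>HPack. Theta x \<in> HPack1)
    \<and> (\<forall>x\<in>HPack. \<forall>y\<in>HPack. Theta (prodPack x y) = prodPack1 (Theta x) (Theta y))
    \<and> Theta unit_elt = unit_elt
    \<and> (\<forall>x\<in>HPack. tensor_map Theta_basis Theta_basis (copPack x) = copPack1 (Theta x))
    \<and> (\<forall>x\<in>HPack. counit (Theta x) = counit x)"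
  using Theta_in_HPack1 Theta_prodPack Theta_unit tensor_map_Theta_copPack counit_Theta
  by blast

end
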